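(* Let $n\in\{3,4\}$, let $S$ be an $n\times n$ magic square, and let $S'$ be any arrangement obtained from $S$ by interchanging the entries of two distinct cells. Then $E_{\mathrm{full}}(S')>E_{\mathrm{full}}(S)=0$, where \[ E_{\mathrm{full}}(T)=\sum_{k=0}^{n-2}\mathrm{Cov}(R_k,Z_T)^2+\sum_{\ell=0}^{n-2}\mathrm{Cov}(C_\ell,Z_T)^2+\mathrm{Cov}(D_{\mathrm{main}},Z_T)^2+\mathrm{Cov}(D_{\mathrm{anti}},Z_T)^2 \] for an arrangement $T=(t_{ij})$ with $Z_T(i,j)=t_{ij}-\frac{n^2+1}{2}$.
   Context: An arrangement is a bijection $(i,j)\mapsto t_{ij}$ from $\{0,\dots,n-1\}^2$ to $\{1,\dots,n^2\}$; it is a magic square if all rows, columns and both main diagonals sum to $n(n^2+1)/2$. $R_k(i,j)=1$ if $i=k$ else $0$; $C_\ell(i,j)=1$ if $j=\ell$ else $0$; $D_{\mathrm{main}}(i,j)=1$ if $i=j$ else $0$; $D_{\mathrm{anti}}(i,j)=1$ if $i+j=n-1$ else $0$. Functions on the grid are random variables under the uniform distribution on cells, with $\mathrm{Cov}(F,G)=\frac1{n^2}\sum_{i,j}(F(i,j)-\bar F)(G(i,j)-\bar G)$. *)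

theory Defs
  imports Complex_Main
begin

definition grid :: "nat \<Rightarrow> (nat \<times> nat) set" where
  "grid n = {0..<n} \<times> {0..<n}"

definition arrangement :: "nat \<Rightarrow> (nat \<times> nat \<Rightarrow> nat) \<Rightarrow> bool" where
  "arrangement n t \<longleftrightarrow> bij_betw t (grid n) {1..n^2}"

definition magic_square :: "nat \<Rightarrow> (nat \<times> nat \<Rightarrow> nat) \<Rightarrow> bool" where
  "magic_square n t \<longleftrightarrow> arrangement n t
     \<and> (\<forall>i<n. real (\<Sum>j<n. t (i, j)) = real n * (real n ^ 2 + 1) / 2)
     \<and> (\<forall>j<n. real (\<Sum>i<n. t (i, j)) = real n * (real n ^ 2 + 1) / 2)
     \<and> real (\<Sum>i<n. t (i, i)) = real n * (real n ^ 2 + 1) / 2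
     \<and> real (\<Sum>i<n. t (i, n - 1 - i)) = real n * (real n ^ 2 + 1) / 2"

definition swap_cells :: "(nat \<times> nat \<Rightarrow> nat) \<Rightarrow> nat \<times> nat \<Rightarrow> nat \<times> nat \<Rightarrow> (nat \<times> nat \<Rightarrow> nat)" where
  "swap_cells t a b = (\<lambda>c. if c = a then t b else if c = b then t a else t c)"

definition grid_mean :: "nat \<Rightarrow> (nat \<times> nat \<Rightarrow> real) \<Rightarrow> real" where
  "grid_mean n F = (\<Sum>c\<in>grid n. F c) / (real n ^ 2)"

definition grid_cov :: "nat \<Rightarrow> (nat \<times> nat \<Rightarrow> real) \<Rightarrow> (nat \<times> nat \<Rightarrow> real) \<Rightarrow> real" where
  "grid_cov n F G = (\<Sum>c\<in>grid n. (F c - grid_mean n F) * (G c - grid_mean n G)) / (real n ^ 2)"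

definition R_ind :: "nat \<Rightarrow> nat \<times> nat \<Rightarrow> real" where
  "R_ind k = (\<lambda>(i, j). if i = k then 1 else 0)"

definition C_ind :: "nat \<Rightarrow> nat \<times> nat \<Rightarrow> real" where
  "C_ind l = (\<lambda>(i, j). if j = l then 1 else 0)"

definition D_main :: "nat \<times> nat \<Rightarrow> real" where
  "D_main = (\<lambda>(i, j). if i = j then 1 else 0)"

definition D_anti :: "nat \<Rightarrow> nat \<times> nat \<Rightarrow> real" where
  "D_anti n = (\<lambda>(i, j). if i + j = n - 1 then 1 else 0)"

definition Z_of :: "nat \<Rightarrow> (nat \<times> nat \<Rightarrow> nat) \<Rightarrow> nat \<times> nat \<Rightarrow> real" where
  "Z_of n t = (\<lambda>c. real (t c) - (real n ^ 2 + 1) / 2)"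

definition E_full :: "nat \<Rightarrow> (nat \<times> nat \<Rightarrow> nat) \<Rightarrow> real" where
  "E_full n t =
     (\<Sum>k\<in>{0..n-2}. (grid_cov n (R_ind k) (Z_of n t))^2)
   + (\<Sum>l\<in>{0..n-2}. (grid_cov n (C_ind l) (Z_of n t))^2)
   + (grid_cov n D_main (Z_of n t))^2
   + (grid_cov n (D_anti n) (Z_of n t))^2"

end

(*
  Because Z_T is centred (the entries of an arrangement are 1..n^2), Cov(F, Z_T) is
  (1/n^2) times the sum of F * Z_T, so the covariance with the indicator of a line is
  the line sum of Z_T divided by n^2.  For a magic square all line sums of Z_S vanish,
  hence E_full S = 0.  Swapping two distinct cells a, b (so S a \<noteq> S b) adds
  (S b - S a)(delta_a - delta_b) to Z, which changes the sum of any row or column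
  containing exactly one of a, b.  Two distinct cells differ in their row or in their
  column index, and of two distinct indices at least one is not n - 1, so even without
  the last row and column E_full sees a nonzero term.
*)
theory Submission
  imports Defs
begin

lemma finite_grid [simp]: "finite (grid n)"
  by (simp add: grid_def)

lemma card_grid: "card (grid n) = n ^ 2"
  by (simp add: grid_def power2_eq_square)

lemma sum_grid: "(\<Sum>c\<in>grid n. g c) = (\<Sum>i<n. \<Sum>j<n. g (i, j))"
  by (simp add: grid_def sum.cartesian_product atLeast0LessThan)

lemma sum_grid_R_ind_mult: "k < n \<Longrightarrow> (\<Sum>c\<in>grid n. R_ind k c * Z c) = (\<Sum>j<n. Z (k, j))"
  by (simp add: sum_grid R_ind_def of_bool_def[symmetric] sum_distrib_left[symmetric])

lemma sum_grid_C_ind_mult: "l < n \<Longrightarrow> (\<Sum>c\<in>grid n. C_ind l c * Z c) = (\<Sum>i<n. Z (i, l))"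
  by (simp add: sum_grid C_ind_def of_bool_def[symmetric])

lemma sum_grid_D_main_mult: "(\<Sum>c\<in>grid n. D_main c * Z c) = (\<Sum>i<n. Z (i, i))"
  by (simp add: sum_grid D_main_def of_bool_def[symmetric])

lemma sum_grid_D_anti_mult: "(\<Sum>c\<in>grid n. D_anti n c * Z c) = (\<Sum>i<n. Z (i, n - 1 - i))"
proof -
  have "{..<n} \<inter> {j. i + j = n - 1} = {n - 1 - i}" if "i < n" for i
    using that by auto
  then show ?thesis
    by (simp add: sum_grid D_anti_def of_bool_def[symmetric])
qed

lemma grid_cov_centred:
  assumes "(\<Sum>c\<in>grid n. Z c) = 0"
  shows "grid_cov n F Z = (\<Sum>c\<in>grid n. F c * Z c) / real n ^ 2"
proof -
  have "grid_mean n Z = 0"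
    using assms by (simp add: grid_mean_def)
  then show ?thesis
    using assms by (simp add: grid_cov_def algebra_simps sum_subtractf flip: sum_distrib_right)
qed

lemma sum_Z_of:
  "(\<Sum>i\<in>I. Z_of n t (f i)) = real (\<Sum>i\<in>I. t (f i)) - real (card I) * ((real n ^ 2 + 1) / 2)"
  by (simp add: Z_of_def sum_subtractf)

lemma sum_grid_Z_of_eq_0:
  assumes "arrangement n t"
  shows "(\<Sum>c\<in>grid n. Z_of n t c) = 0"
proof -
  have "(\<Sum>c\<in>grid n. real (t c)) = (\<Sum>x\<in>{1..n ^ 2}. real x)"
    using assms unfolding arrangement_def by (rule sum.reindex_bij_betw)
  also have "\<dots> = real (n ^ 2) * (real (n ^ 2) + 1) / 2"
    using double_gauss_sum_from_Suc_0[of "n ^ 2", where 'a=real] by simp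
  finally show ?thesis
    using sum_Z_of[of n t id "grid n"] by (simp add: card_grid)
qed

lemma
  assumes "magic_square n S"
  shows magic_square_row_sum_Z_of: "k < n \<Longrightarrow> (\<Sum>j<n. Z_of n S (k, j)) = 0"
    and magic_square_col_sum_Z_of: "l < n \<Longrightarrow> (\<Sum>i<n. Z_of n S (i, l)) = 0"
    and magic_square_diag_sum_Z_of: "(\<Sum>i<n. Z_of n S (i, i)) = 0"
    and magic_square_anti_diag_sum_Z_of: "(\<Sum>i<n. Z_of n S (i, n - 1 - i)) = 0"
  using assms by (simp_all add: magic_square_def sum_Z_of)

lemma
  assumes "magic_square n S"
  shows magic_square_row_cov_eq_0: "k < n \<Longrightarrow> grid_cov n (R_ind k) (Z_of n S) = 0"
    and magic_square_col_cov_eq_0: "l < n \<Longrightarrow> grid_cov n (C_ind l) (Z_of n S) = 0"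
    and magic_square_diag_cov_eq_0: "grid_cov n D_main (Z_of n S) = 0"
    and magic_square_anti_diag_cov_eq_0: "grid_cov n (D_anti n) (Z_of n S) = 0"
proof -
  have centred: "(\<Sum>c\<in>grid n. Z_of n S c) = 0"
    using assms by (simp add: magic_square_def sum_grid_Z_of_eq_0)
  show "k < n \<Longrightarrow> grid_cov n (R_ind k) (Z_of n S) = 0"
    using assms
    by (simp add: grid_cov_centred[OF centred] sum_grid_R_ind_mult magic_square_row_sum_Z_of)
  show "l < n \<Longrightarrow> grid_cov n (C_ind l) (Z_of n S) = 0"
    using assms
    by (simp add: grid_cov_centred[OF centred] sum_grid_C_ind_mult magic_square_col_sum_Z_of)
  show "grid_cov n D_main (Z_of n S) = 0"
    using assms
    by (simp add: grid_cov_centred[OF centred] sum_grid_D_main_mult magic_square_diag_sum_Z_of)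
  show "grid_cov n (D_anti n) (Z_of n S) = 0"
    by (simp only: grid_cov_centred[OF centred] sum_grid_D_anti_mult
        magic_square_anti_diag_sum_Z_of[OF assms])
qed

lemma E_full_magic_square:
  assumes "magic_square n S"
  shows "E_full n S = 0"
proof (cases "n = 0")
  case True
  then show ?thesis
    by (simp add: E_full_def grid_cov_def grid_def)
next
  case False
  then have "k \<le> n - 2 \<Longrightarrow> k < n" for k
    by linarith
  then show ?thesis
    using assms by (simp add: E_full_def magic_square_row_cov_eq_0 magic_square_col_cov_eq_0
        magic_square_diag_cov_eq_0 magic_square_anti_diag_cov_eq_0)
qed

lemma Z_of_swap_cells:
  assumes "a \<noteq> b"
  shows "Z_of n (swap_cells t a b) c
    = Z_of n t c + (of_bool (c = a) - of_bool (c = b)) * (real (t b) - real (t a))"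
  using assms by (auto simp: swap_cells_def Z_of_def)

lemma sum_mult_Z_of_swap_cells:
  assumes "finite A" "a \<in> A" "b \<in> A" "a \<noteq> b"
  shows "(\<Sum>c\<in>A. F c * Z_of n (swap_cells t a b) c)
    = (\<Sum>c\<in>A. F c * Z_of n t c) + (F a - F b) * (real (t b) - real (t a))"
proof -
  have "(\<Sum>c\<in>A. F c * of_bool (c = x)) = F x" if "x \<in> A" for x
  proof -
    have "A \<inter> {c. c = x} = {x}"
      using that by blast
    then show ?thesis
      using assms(1) by simp
  qed
  with assms show ?thesis
    by (simp add: Z_of_swap_cells ring_distribs sum.distrib sum_subtractf
        flip: sum_distrib_right mult.assoc)
qed

lemma grid_cov_Z_of_swap_cells:
  assumes "arrangement n t" "a \<in> grid n" "b \<in> grid n" "a \<noteq> b"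
  shows "grid_cov n F (Z_of n (swap_cells t a b))
    = grid_cov n F (Z_of n t) + (F a - F b) * (real (t b) - real (t a)) / real n ^ 2"
proof -
  have centred: "(\<Sum>c\<in>grid n. Z_of n t c) = 0"
    using assms(1) by (rule sum_grid_Z_of_eq_0)
  then have "(\<Sum>c\<in>grid n. Z_of n (swap_cells t a b) c) = 0"
    using sum_mult_Z_of_swap_cells[of "grid n" a b "\<lambda>_. 1"] assms(2-4) by simp
  then show ?thesis
    using assms(2-4)
    by (simp add: grid_cov_centred centred sum_mult_Z_of_swap_cells add_divide_distrib)
qed

lemma ex_separating_index_le_diff_2:
  fixes x y n :: nat
  assumes "x \<noteq> y" "x < n" "y < n"
  obtains k where "k \<le> n - 2" "(x = k) \<noteq> (y = k)"
proof (cases "x \<le> n - 2")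
  case True
  with assms(1) show ?thesis by (intro that[of x]) auto
next
  case False
  with assms have "y \<le> n - 2" by linarith
  with assms(1) show ?thesis by (intro that[of y]) auto
qed

lemma
  assumes "k \<le> n - 2"
  shows row_cov_sq_le_E_full: "(grid_cov n (R_ind k) (Z_of n t))\<^sup>2 \<le> E_full n t"
    and col_cov_sq_le_E_full: "(grid_cov n (C_ind k) (Z_of n t))\<^sup>2 \<le> E_full n t"
proof -
  let ?R = "\<Sum>i\<in>{0..n-2}. (grid_cov n (R_ind i) (Z_of n t))\<^sup>2"
  let ?C = "\<Sum>i\<in>{0..n-2}. (grid_cov n (C_ind i) (Z_of n t))\<^sup>2"
  have "(grid_cov n (R_ind k) (Z_of n t))\<^sup>2 \<le> ?R" "(grid_cov n (C_ind k) (Z_of n t))\<^sup>2 \<le> ?C"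
    using assms by (auto intro: member_le_sum)
  moreover have "0 \<le> ?R" "0 \<le> ?C"
    "0 \<le> (grid_cov n D_main (Z_of n t))\<^sup>2" "0 \<le> (grid_cov n (D_anti n) (Z_of n t))\<^sup>2"
    by (simp_all add: sum_nonneg)
  ultimately show "(grid_cov n (R_ind k) (Z_of n t))\<^sup>2 \<le> E_full n t"
    and "(grid_cov n (C_ind k) (Z_of n t))\<^sup>2 \<le> E_full n t"
    unfolding E_full_def by linarith+
qed

lemma ex_row_or_col_separating:
  assumes "a \<in> grid n" "b \<in> grid n" "a \<noteq> b"
  obtains k where "k \<le> n - 2" "R_ind k a \<noteq> R_ind k b \<or> C_ind k a \<noteq> C_ind k b"
proof (cases "fst a = fst b")
  case False
  then obtain k where "k \<le> n - 2" "(fst a = k) \<noteq> (fst b = k)"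
    by (rule ex_separating_index_le_diff_2) (use assms(1,2) in \<open>auto simp: grid_def\<close>)
  then show ?thesis
    by (intro that[of k]) (auto simp: R_ind_def split: prod.splits)
next
  case True
  then have "snd a \<noteq> snd b"
    using assms(3) by (simp add: prod_eq_iff)
  then obtain k where "k \<le> n - 2" "(snd a = k) \<noteq> (snd b = k)"
    by (rule ex_separating_index_le_diff_2) (use assms(1,2) in \<open>auto simp: grid_def\<close>)
  then show ?thesis
    by (intro that[of k]) (auto simp: C_ind_def split: prod.splits)
qed

lemma E_full_swap_cells_magic_square_pos:
  assumes "magic_square n S" "a \<in> grid n" "b \<in> grid n" "a \<noteq> b"
  shows "E_full n (swap_cells S a b) > 0"
proof -
  let ?Z' = "Z_of n (swap_cells S a b)"
  let ?d = "real (S b) - real (S a)"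
  have arr: "arrangement n S"
    using assms(1) by (simp add: magic_square_def)
  then have "S a \<noteq> S b"
    using assms(2-4) unfolding arrangement_def by (metis bij_betw_imp_inj_on inj_on_contraD)
  moreover have "n \<noteq> 0"
    using assms(2) by (auto simp: grid_def)
  ultimately have pos: "0 < ((F a - F b) * ?d / real n ^ 2)\<^sup>2"
    if "F a \<noteq> F b" for F :: "nat \<times> nat \<Rightarrow> real"
    using that by simp
  obtain k where k: "k \<le> n - 2" "R_ind k a \<noteq> R_ind k b \<or> C_ind k a \<noteq> C_ind k b"
    using assms(2-4) by (rule ex_row_or_col_separating)
  then have "k < n"
    using \<open>n \<noteq> 0\<close> by linarith
  have "grid_cov n (R_ind k) ?Z' = (R_ind k a - R_ind k b) * ?d / real n ^ 2"
    "grid_cov n (C_ind k) ?Z' = (C_ind k a - C_ind k b) * ?d / real n ^ 2"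
    using assms(1) \<open>k < n\<close>
    by (simp_all add: grid_cov_Z_of_swap_cells[OF arr assms(2-4)]
        magic_square_row_cov_eq_0 magic_square_col_cov_eq_0)
  then have "0 < (grid_cov n (R_ind k) ?Z')\<^sup>2 \<or> 0 < (grid_cov n (C_ind k) ?Z')\<^sup>2"
    using k(2) pos by auto
  then show ?thesis
    using row_cov_sq_le_E_full[OF k(1), of "swap_cells S a b"]
      col_cov_sq_le_E_full[OF k(1), of "swap_cells S a b"]
    by linarith
qed

theorem mainTheorem9:
  fixes n :: nat and S :: "nat \<times> nat \<Rightarrow> nat" and a b :: "nat \<times> nat"
  assumes "n \<in> {3, 4}"
    and "magic_square n S"
    and "a \<in> grid n" and "b \<in> grid n" and "a \<noteq> b"
  shows "E_full n (swap_cells S a b) > E_full n S \<and> E_full n S = 0"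
  using E_full_magic_square[OF assms(2)] E_full_swap_cells_magic_square_pos[OF assms(2-5)]
  by simp

end
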